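(* Let $\mathbf h,\mathbf g\in\mathbb C^{N}$ be nonzero, $P_t>0$, $\eta>0$, and consider $$\max_{\mathbf f\in\mathbb C^N}\ |\mathbf h^{H}\mathbf f|^2\quad\text{s.t.}\quad \|\mathbf f\|^2\le P_t,\quad |\mathbf g^{H}\mathbf f|^2\ge\eta .$$ An optimal solution has the form $\mathbf f=a\mathbf h+b\mathbf g$ with $a,b\in\mathbb C$, where: Case 1: if $\eta\le \dfrac{P_t|\mathbf g^{H}\mathbf h|^2}{\|\mathbf h\|^2}$, then $|a|=\dfrac{\sqrt{P_t}}{\|\mathbf h\|}$, $b=0$, with the phase of $a$ arbitrary. Case 2: if $\dfrac{P_t|\mathbf g^{H}\mathbf h|^2}{\|\mathbf h\|^2}\le\eta\le P_t\|\mathbf g\|^2$ (and $\mathbf h,\mathbf g$ are linearly independent), then $$|a|=\sqrt{\frac{P_t\|\mathbf g\|^2-\eta}{\|\mathbf h\|^2\|\mathbf g\|^2-|\mathbf h^{H}\mathbf g|^2}},\qquad |b|=\frac{\sqrt\eta}{\|\mathbf g\|^2}-\frac{|\mathbf h^{H}\mathbf g|}{\|\mathbf g\|^2}|a|,$$ with phases satisfying $\angle(a)-\angle(b)=\angle(\mathbf h^{H}\mathbf g)$. Case 3: if $\eta>P_t\|\mathbf g\|^2$, the problem is infeasible. *)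

theory Defs
  imports "HOL-Analysis.Analysis"
begin

text \<open>Vectors in C^N are modelled as complex ^ 'n (N = CARD('n)).
  herm x y is the Hermitian product x^H y = sum_i conj(x_i) y_i.
  norm on complex ^ 'n is the Euclidean (l2) norm.\<close>

definition herm :: "complex ^ 'n \<Rightarrow> complex ^ 'n \<Rightarrow> complex" where
  "herm x y = (\<Sum>i\<in>UNIV. cnj (x $ i) * y $ i)"

definition feasible :: "real \<Rightarrow> real \<Rightarrow> complex ^ 'n \<Rightarrow> complex ^ 'n \<Rightarrow> bool" where
  "feasible Pt \<eta> g f \<longleftrightarrow> norm f ^ 2 \<le> Pt \<and> cmod (herm g f) ^ 2 \<ge> \<eta>"

definition optimal :: "real \<Rightarrow> real \<Rightarrow> complex ^ 'n \<Rightarrow> complex ^ 'n \<Rightarrow> complex ^ 'n \<Rightarrow> bool" where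
  "optimal Pt \<eta> h g f \<longleftrightarrow> feasible Pt \<eta> g f \<and>
     (\<forall>f'. feasible Pt \<eta> g f' \<longrightarrow> cmod (herm h f') ^ 2 \<le> cmod (herm h f) ^ 2)"

end

theory Submission
  imports Defs
begin

(* Write f = w + (g^H f / |g|^2) g with w orthogonal to g, and split h in the same way. Then
   |g|^2 |h^H f| <= |h^H g| |g^H f| + sqrt(Gram(h,g)) |g| |w|, while the power constraint becomes
   |g^H f|^2 + |g|^2 |w|^2 <= Pt |g|^2. Maximising this linear form in (|g^H f|, |g| |w|) over the
   part of that disc where |g^H f| >= sqrt eta puts the maximum at |g^H f| = sqrt eta precisely when
   the matched filter f ~ h violates the interference constraint; the combination a h + b g with
   the stated moduli and aligned phases attains the bound. Cases 1 and 3 are Cauchy-Schwarz. *)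

lemma herm_add_left: "herm (x + y) z = herm x z + herm y z"
  by (simp add: herm_def distrib_right sum.distrib)

lemma herm_add_right: "herm x (y + z) = herm x y + herm x z"
  by (simp add: herm_def distrib_left sum.distrib)

lemma herm_diff_right: "herm x (y - z) = herm x y - herm x z"
  by (simp add: herm_def right_diff_distrib sum_subtractf)

lemma herm_scale_left: "herm (c *s x) y = cnj c * herm x y"
  by (simp add: herm_def sum_distrib_left algebra_simps)

lemma herm_scale_right: "herm x (c *s y) = c * herm x y"
  by (simp add: herm_def sum_distrib_left algebra_simps)

lemma herm_commute: "herm y x = cnj (herm x y)"
  by (simp add: herm_def mult.commute)

lemma cmod_herm_commute: "cmod (herm y x) = cmod (herm x y)"
  by (simp add: herm_commute[of y x])

lemma Re_herm: "Re (herm x y) = inner x y"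
  by (simp add: herm_def inner_vec_def inner_complex_def Re_sum)

lemma herm_self: "herm x x = of_real (norm x ^ 2)"
proof -
  have "Im (herm x x) = 0"
    by (simp add: herm_def Im_sum)
  then show ?thesis
    by (simp add: complex_eq_iff power2_norm_eq_inner Re_herm)
qed

lemma cnj_mult_self: "cnj z * z = of_real (cmod z ^ 2)"
  by (metis complex_norm_square mult.commute)

lemma norm_vector_scalar_mult: "norm (c *s x) = cmod c * norm (x :: complex ^ 'n)"
proof -
  have "of_real (norm (c *s x) ^ 2) = cnj c * c * herm x x"
    by (simp only: herm_self[symmetric] herm_scale_left herm_scale_right mult.assoc mult.left_commute)
  also have "\<dots> = of_real ((cmod c * norm x) ^ 2)"
    by (simp only: cnj_mult_self herm_self power_mult_distrib of_real_mult)
  finally show ?thesis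
    by (simp only: of_real_eq_iff power2_eq_iff_nonneg norm_ge_zero mult_nonneg_nonneg)
qed

lemma cmod_herm_le: "cmod (herm x y) \<le> norm x * norm y"
proof (cases "herm x y = 0")
  case False
  define u where "u = cnj (herm x y) / cmod (herm x y)"
  have "herm x (u *s y) = of_real (cmod (herm x y))"
    using False by (simp add: herm_scale_right u_def cnj_mult_self power2_eq_square)
  then have "cmod (herm x y) = inner x (u *s y)"
    by (metis Re_complex_of_real Re_herm)
  also have "\<dots> \<le> norm x * norm (u *s y)"
    by (rule norm_cauchy_schwarz)
  finally show ?thesis
    using False by (simp add: norm_vector_scalar_mult u_def norm_divide)
qed simp

lemma cmod_herm_sq_le: "cmod (herm x y) ^ 2 \<le> norm x ^ 2 * norm y ^ 2"
  by (metis cmod_herm_le norm_ge_zero power_mono power_mult_distrib)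

definition orth_comp :: "complex ^ 'n \<Rightarrow> complex ^ 'n \<Rightarrow> complex ^ 'n" where
  "orth_comp g x = x - (herm g x / of_real (norm g ^ 2)) *s g"

lemma herm_orth_comp_right: "g \<noteq> 0 \<Longrightarrow> herm g (orth_comp g x) = 0"
  by (simp add: orth_comp_def herm_diff_right herm_scale_right herm_self)

lemma herm_orth_comp_left: "g \<noteq> 0 \<Longrightarrow> herm (orth_comp g x) g = 0"
  by (simp add: herm_commute[of "orth_comp g x"] herm_orth_comp_right)

lemma herm_orth_comp_decomp:
  assumes "g \<noteq> 0"
  shows "herm x y = herm (orth_comp g x) (orth_comp g y)
                    + herm x g * herm g y / of_real (norm g ^ 2)"
proof -
  have x: "x = orth_comp g x + (herm g x / of_real (norm g ^ 2)) *s g"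
    and y: "y = orth_comp g y + (herm g y / of_real (norm g ^ 2)) *s g"
    by (simp_all add: orth_comp_def)
  show ?thesis
    using assms
    by (subst x, subst y)
      (simp add: herm_add_left herm_add_right herm_scale_left herm_scale_right
        herm_orth_comp_left herm_orth_comp_right herm_self herm_commute[of g x] field_simps power2_eq_square)
qed

lemma norm_orth_comp_sq:
  assumes "g \<noteq> 0"
  shows "norm g ^ 2 * norm (orth_comp g x) ^ 2 = norm g ^ 2 * norm x ^ 2 - cmod (herm g x) ^ 2"
proof -
  have "herm x g * herm g x = of_real (cmod (herm g x) ^ 2)"
    by (simp add: herm_commute[of x g] cnj_mult_self)
  then have "norm x ^ 2 = norm (orth_comp g x) ^ 2 + cmod (herm g x) ^ 2 / norm g ^ 2"
    using arg_cong[OF herm_orth_comp_decomp[OF assms, of x x], of Re]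
    by (simp add: herm_self del: of_real_power)
  then show ?thesis
    using assms by (simp add: field_simps)
qed

definition gram :: "complex ^ 'n \<Rightarrow> complex ^ 'n \<Rightarrow> real" where
  "gram h g = norm h ^ 2 * norm g ^ 2 - cmod (herm h g) ^ 2"

lemma gram_eq_norm_orth_comp: "g \<noteq> 0 \<Longrightarrow> gram h g = norm g ^ 2 * norm (orth_comp g h) ^ 2"
  by (simp add: gram_def norm_orth_comp_sq cmod_herm_commute[of g h] mult.commute)

lemma gram_pos:
  assumes "g \<noteq> 0" and "\<forall>c d::complex. c *s h + d *s g = 0 \<longrightarrow> c = 0 \<and> d = 0"
  shows "gram h g > 0"
proof -
  have "orth_comp g h \<noteq> 0"
  proof
    assume "orth_comp g h = 0"
    then have "1 *s h + (- (herm g h / of_real (norm g ^ 2))) *s g = 0"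
      by (simp add: orth_comp_def vec_eq_iff)
    then show False
      using assms(2) by (metis zero_neq_one)
  qed
  then show ?thesis
    using assms(1) by (simp add: gram_eq_norm_orth_comp)
qed

lemma cmod_herm_le_orth_comp:
  assumes "g \<noteq> 0"
  shows "norm g ^ 2 * cmod (herm h f) \<le> cmod (herm h g) * cmod (herm g f)
           + sqrt (gram h g) * sqrt (norm g ^ 2 * norm f ^ 2 - cmod (herm g f) ^ 2)"
proof -
  let ?G = "norm g ^ 2"
  have G: "?G > 0"
    using assms by simp
  have "cmod (herm h f)
      \<le> cmod (herm (orth_comp g h) (orth_comp g f)) + cmod (herm h g) * cmod (herm g f) / ?G"
    using norm_triangle_ineq[of "herm (orth_comp g h) (orth_comp g f)" "herm h g * herm g f / of_real ?G"]
    by (simp add: herm_orth_comp_decomp[OF assms, of h f] norm_mult norm_divide del: of_real_power)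
  then have "?G * cmod (herm h f)
      \<le> ?G * cmod (herm (orth_comp g h) (orth_comp g f)) + cmod (herm h g) * cmod (herm g f)"
    using G by (simp add: field_simps)
  also have "?G * cmod (herm (orth_comp g h) (orth_comp g f))
      \<le> (norm g * norm (orth_comp g h)) * (norm g * norm (orth_comp g f))"
    using mult_left_mono[OF cmod_herm_le[of "orth_comp g h" "orth_comp g f"], of ?G]
    by (simp add: power2_eq_square ac_simps)
  also have "\<dots> = sqrt (gram h g) * sqrt (?G * norm f ^ 2 - cmod (herm g f) ^ 2)"
    unfolding gram_eq_norm_orth_comp[OF assms] norm_orth_comp_sq[OF assms, symmetric]
    by (simp flip: power_mult_distrib)
  finally show ?thesis
    by (simp add: add.commute)
qed

lemma linear_form_le_at_arc_end:
  fixes p p0 q q0 r c :: real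
  assumes "0 \<le> p0" "p0 \<le> p" "0 \<le> q" "0 \<le> q0" "0 \<le> r" "0 \<le> c"
    and arc: "p ^ 2 + q ^ 2 \<le> p0 ^ 2 + q0 ^ 2"
    and slope: "r * q0 \<le> c * p0"
  shows "r * p + c * q \<le> r * p0 + c * q0"
proof -
  have "q ^ 2 \<le> q0 ^ 2"
    using arc power_mono[OF assms(2,1), of 2] by linarith
  then have "q \<le> q0"
    using assms(3,4) by (simp add: power2_le_iff_abs_le)
  show ?thesis
  proof (cases "p = p0")
    case True
    then show ?thesis
      using \<open>q \<le> q0\<close> assms(6) by (simp add: mult_left_mono)
  next
    case False
    then have "p + p0 > 0"
      using assms(1,2) by linarith
    \<comment> \<open>The arc bounds the gain in p by the loss in q; the slope condition compares the two.\<close>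
    have "r * ((p - p0) * (p + p0)) \<le> r * ((q0 - q) * (q0 + q))"
      using arc assms(5) by (intro mult_left_mono) (simp_all add: algebra_simps power2_eq_square)
    also have "\<dots> = (q0 - q) * (r * (q0 + q))"
      by (simp add: algebra_simps)
    also have "\<dots> \<le> (q0 - q) * (c * (p + p0))"
      using \<open>q \<le> q0\<close> slope assms(2,5,6) mult_left_mono[of q q0 r] mult_left_mono[of p0 p c]
      by (intro mult_left_mono) (simp_all add: algebra_simps)
    finally have "r * (p - p0) * (p + p0) \<le> c * (q0 - q) * (p + p0)"
      by (simp add: algebra_simps)
    then have "r * (p - p0) \<le> c * (q0 - q)"
      using \<open>p + p0 > 0\<close> by (simp add: mult_le_cancel_right)
    then show ?thesis
      by (simp add: algebra_simps)
  qed
qed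

lemma interference_threshold_gram:
  assumes "Pt * cmod (herm h g) ^ 2 \<le> \<eta> * norm h ^ 2"
  shows "cmod (herm h g) ^ 2 * (Pt * norm g ^ 2 - \<eta>) \<le> \<eta> * gram h g"
proof -
  have "norm g ^ 2 * (Pt * cmod (herm h g) ^ 2) \<le> norm g ^ 2 * (\<eta> * norm h ^ 2)"
    using assms by (simp add: mult_left_mono)
  then show ?thesis
    by (simp add: gram_def algebra_simps)
qed

lemma cmod_herm_le_of_feasible:
  assumes "g \<noteq> 0" and "feasible Pt \<eta> g f" and "0 \<le> \<eta>"
    and threshold: "Pt * cmod (herm h g) ^ 2 \<le> \<eta> * norm h ^ 2" and "\<eta> \<le> Pt * norm g ^ 2"
  shows "norm g ^ 2 * cmod (herm h f)
           \<le> cmod (herm h g) * sqrt \<eta> + sqrt (gram h g * (Pt * norm g ^ 2 - \<eta>))"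
proof -
  let ?s = "cmod (herm g f)" and ?G = "norm g ^ 2"
  have "gram h g \<ge> 0"
    using assms(1) by (simp add: gram_eq_norm_orth_comp)
  have perp: "0 \<le> ?G * norm f ^ 2 - ?s ^ 2"
    using cmod_herm_sq_le[of g f] by simp
  have "cmod (herm h g) * ?s + sqrt (gram h g) * sqrt (?G * norm f ^ 2 - ?s ^ 2)
      \<le> cmod (herm h g) * sqrt \<eta> + sqrt (gram h g) * sqrt (Pt * ?G - \<eta>)"
  proof (rule linear_form_le_at_arc_end)
    show "sqrt \<eta> \<le> ?s"
      using assms(2) real_sqrt_le_mono[of \<eta> "?s ^ 2"] by (simp add: feasible_def)
    show "?s ^ 2 + (sqrt (?G * norm f ^ 2 - ?s ^ 2)) ^ 2 \<le> (sqrt \<eta>) ^ 2 + (sqrt (Pt * ?G - \<eta>)) ^ 2"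
      using assms(2-5) perp mult_left_mono[of "norm f ^ 2" Pt ?G] by (simp add: feasible_def mult.commute)
    show "cmod (herm h g) * sqrt (Pt * ?G - \<eta>) \<le> sqrt (gram h g) * sqrt \<eta>"
      using real_sqrt_le_mono[OF interference_threshold_gram[OF threshold]]
      by (simp add: real_sqrt_mult mult.commute)
  qed (use \<open>gram h g \<ge> 0\<close> assms(3,5) perp in auto)
  then show ?thesis
    using cmod_herm_le_orth_comp[OF assms(1), of h f] by (simp add: real_sqrt_mult mult.commute)
qed

lemma cmod_add_eq_add_cmod:
  assumes "x * cnj y = of_real (cmod x * cmod y)"
  shows "cmod (x + y) = cmod x + cmod y"
proof -
  have "(x + y) * cnj (x + y) = x * cnj x + y * cnj y + x * cnj y + cnj (x * cnj y)"
    by (simp add: algebra_simps)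
  also have "\<dots> = of_real ((cmod x + cmod y) ^ 2)"
    unfolding assms complex_norm_square[symmetric] by (simp add: power2_eq_square algebra_simps)
  finally have "cmod (x + y) ^ 2 = (cmod x + cmod y) ^ 2"
    by (simp only: complex_norm_square[symmetric] of_real_eq_iff)
  then show ?thesis
    by (simp add: power2_eq_iff_nonneg)
qed

lemma cnj_mult_mult_eq_of_Arg_diff:
  assumes "\<exists>k::int. Arg a - Arg b = Arg z + 2 * pi * of_int k"
  shows "cnj a * b * z = of_real (cmod a * cmod b * cmod z)"
proof -
  obtain k :: int where "Arg a - Arg b = Arg z + 2 * pi * of_int k"
    using assms by blast
  then have k: "- Arg a + Arg b + Arg z = - (2 * pi * of_int k)"
    by linarith
  have "cnj a * b * z = rcis (cmod a) (- Arg a) * rcis (cmod b) (Arg b) * rcis (cmod z) (Arg z)"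
    by (simp add: rcis_cnj rcis_cmod_Arg)
  also have "\<dots> = rcis (cmod a * cmod b * cmod z) (- (2 * pi * of_int k))"
    by (simp only: rcis_mult k)
  also have "\<dots> = of_real (cmod a * cmod b * cmod z)"
    by (simp add: rcis_def cis_cnj[symmetric])
  finally show ?thesis .
qed

lemma Arg_rcis_mod_2pi: "r > 0 \<Longrightarrow> \<exists>k::int. Arg (rcis r t) = t + 2 * pi * of_int k"
  by (intro exI[of _ "- \<lceil>t / (2 * pi) - 1 / 2\<rceil>"]) (simp add: Arg_rcis' normalize_angle_def)

(* Since Arg 0 = 0, a prescribed phase difference needs one nonzero modulus. *)
lemma exists_moduli_Arg_diff:
  fixes ma mb \<theta> :: real
  assumes "0 \<le> ma" "0 \<le> mb" "0 < ma \<or> 0 < mb"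
  shows "\<exists>a b. cmod a = ma \<and> cmod b = mb \<and> (\<exists>k::int. Arg a - Arg b = \<theta> + 2 * pi * of_int k)"
proof (cases "0 < ma")
  case True
  then obtain k :: int where "Arg (rcis ma \<theta>) = \<theta> + 2 * pi * of_int k"
    using Arg_rcis_mod_2pi by blast
  then show ?thesis
    using assms(2) True
    by (intro exI[of _ "rcis ma \<theta>"] exI[of _ "of_real mb"]) (auto simp: Arg_of_real)
next
  case False
  then have "ma = 0" "0 < mb"
    using assms by auto
  then obtain k :: int where "Arg (rcis mb (- \<theta>)) = - \<theta> + 2 * pi * of_int k"
    using Arg_rcis_mod_2pi by blast
  then have "Arg 0 - Arg (rcis mb (- \<theta>)) = \<theta> + 2 * pi * of_int (- k)"
    by (simp add: Arg_zero)
  moreover have "cmod (rcis mb (- \<theta>)) = mb"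
    using \<open>0 < mb\<close> by simp
  ultimately show ?thesis
    using \<open>ma = 0\<close> by (metis norm_zero)
qed

lemma norm_combination_sq:
  assumes "g \<noteq> 0"
  shows "norm g ^ 2 * norm (a *s h + b *s g) ^ 2
           = cmod a ^ 2 * gram h g + cmod (herm g (a *s h + b *s g)) ^ 2"
proof -
  have "(a * herm g h + b * of_real (norm g ^ 2)) / of_real (norm g ^ 2) = a * (herm g h / of_real (norm g ^ 2)) + b"
    using assms by (simp add: field_simps del: of_real_power)
  then have "orth_comp g (a *s h + b *s g) = a *s orth_comp g h"
    by (simp add: orth_comp_def herm_add_right herm_scale_right herm_self vec_eq_iff algebra_simps del: of_real_power)
  then have "norm g ^ 2 * norm (orth_comp g (a *s h + b *s g)) ^ 2 = cmod a ^ 2 * gram h g"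
    using assms by (simp add: norm_vector_scalar_mult gram_eq_norm_orth_comp power_mult_distrib)
  then show ?thesis
    using norm_orth_comp_sq[OF assms, of "a *s h + b *s g"] by simp
qed

lemma cmod_herm_aligned_combination:
  assumes aligned: "cnj a * b * herm h g = of_real (cmod a * cmod b * cmod (herm h g))"
  shows "cmod (herm g (a *s h + b *s g)) = cmod a * cmod (herm h g) + cmod b * norm g ^ 2"
    and "cmod (herm h (a *s h + b *s g)) = cmod a * norm h ^ 2 + cmod b * cmod (herm h g)"
proof -
  have "cmod (herm g (a *s h + b *s g)) = cmod (a * cnj (herm h g) + b * of_real (norm g ^ 2))"
    by (simp add: herm_add_right herm_scale_right herm_self herm_commute[of g h])
  also have "\<dots> = cmod a * cmod (herm h g) + cmod b * norm g ^ 2"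
    using arg_cong[OF aligned, of "\<lambda>z. of_real (norm g ^ 2) * cnj z"]
    by (subst cmod_add_eq_add_cmod) (simp_all add: norm_mult ac_simps del: of_real_power)
  finally show "cmod (herm g (a *s h + b *s g)) = cmod a * cmod (herm h g) + cmod b * norm g ^ 2" .
  have "cmod (herm h (a *s h + b *s g)) = cmod (a * of_real (norm h ^ 2) + b * herm h g)"
    by (simp add: herm_add_right herm_scale_right herm_self)
  also have "\<dots> = cmod a * norm h ^ 2 + cmod b * cmod (herm h g)"
    using arg_cong[OF aligned, of "\<lambda>z. of_real (norm h ^ 2) * cnj z"]
    by (subst cmod_add_eq_add_cmod) (simp_all add: norm_mult ac_simps del: of_real_power)
  finally show "cmod (herm h (a *s h + b *s g)) = cmod a * norm h ^ 2 + cmod b * cmod (herm h g)" .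
qed

lemma optimal_aligned_combination:
  fixes h g :: "complex ^ 'n"
  assumes "g \<noteq> 0" and "0 \<le> \<eta>" and "gram h g > 0"
    and threshold: "Pt * cmod (herm h g) ^ 2 \<le> \<eta> * norm h ^ 2" and "\<eta> \<le> Pt * norm g ^ 2"
    and a: "cmod a = sqrt ((Pt * norm g ^ 2 - \<eta>) / gram h g)"
    and b: "cmod b = sqrt \<eta> / norm g ^ 2 - cmod (herm h g) / norm g ^ 2 * cmod a"
    and aligned: "cnj a * b * herm h g = of_real (cmod a * cmod b * cmod (herm h g))"
  shows "optimal Pt \<eta> h g (a *s h + b *s g)"
proof -
  define f where "f = a *s h + b *s g"
  let ?G = "norm g ^ 2" and ?r = "cmod (herm h g)"
  have "?G > 0"
    using assms(1) by simp
  have bG: "cmod b * ?G = sqrt \<eta> - ?r * cmod a"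
    using b \<open>?G > 0\<close> by (simp add: field_simps)
  have a_gram: "cmod a ^ 2 * gram h g = Pt * ?G - \<eta>"
    using a assms(3,5) by simp
  have "cmod (herm g f) = cmod a * ?r + cmod b * ?G"
    using cmod_herm_aligned_combination[OF aligned] by (simp add: f_def)
  also have "\<dots> = sqrt \<eta>"
    using bG by simp
  finally have gf: "cmod (herm g f) = sqrt \<eta>" .
  have nf: "norm f ^ 2 = Pt"
    using norm_combination_sq[OF assms(1), of a h b] a_gram gf assms(2) \<open>?G > 0\<close>
    by (simp add: f_def field_simps)
  have "cmod (herm h f) = cmod a * norm h ^ 2 + cmod b * ?r"
    using cmod_herm_aligned_combination[OF aligned] by (simp add: f_def)
  then have "?G * cmod (herm h f) = cmod a * gram h g + ?r * (cmod a * ?r + cmod b * ?G)"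
    by (simp add: gram_def algebra_simps power2_eq_square)
  also have "cmod a * ?r + cmod b * ?G = sqrt \<eta>"
    using bG by simp
  also have "cmod a * gram h g = sqrt ((cmod a * gram h g) ^ 2)"
    using assms(3) by simp
  also have "(cmod a * gram h g) ^ 2 = gram h g * (Pt * ?G - \<eta>)"
    unfolding a_gram[symmetric] by (simp add: power2_eq_square)
  finally have hf: "?G * cmod (herm h f) = ?r * sqrt \<eta> + sqrt (gram h g * (Pt * ?G - \<eta>))"
    by simp
  show ?thesis
    unfolding optimal_def f_def[symmetric]
  proof (intro conjI allI impI)
    show "feasible Pt \<eta> g f"
      using nf gf assms(2) by (simp add: feasible_def)
    fix f' assume "feasible Pt \<eta> g f'"
    then have "?G * cmod (herm h f') \<le> ?G * cmod (herm h f)"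
      using cmod_herm_le_of_feasible[OF assms(1) _ assms(2) threshold assms(5)] hf by simp
    then show "cmod (herm h f') ^ 2 \<le> cmod (herm h f) ^ 2"
      using \<open>?G > 0\<close> by (simp add: power_mono)
  qed
qed

lemma exists_aligned_coefficients:
  fixes h g :: "complex ^ 'n"
  assumes "g \<noteq> 0" and "0 < \<eta>" and "gram h g > 0"
    and threshold: "Pt * cmod (herm h g) ^ 2 \<le> \<eta> * norm h ^ 2" and "\<eta> \<le> Pt * norm g ^ 2"
  shows "\<exists>a b. cmod a = sqrt ((Pt * norm g ^ 2 - \<eta>) / gram h g) \<and>
                cmod b = sqrt \<eta> / norm g ^ 2 - cmod (herm h g) / norm g ^ 2 * cmod a \<and>
                (\<exists>k::int. Arg a - Arg b = Arg (herm h g) + 2 * pi * of_int k)"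
proof -
  define ma where "ma = sqrt ((Pt * norm g ^ 2 - \<eta>) / gram h g)"
  define mb where "mb = sqrt \<eta> / norm g ^ 2 - cmod (herm h g) / norm g ^ 2 * ma"
  have "ma \<ge> 0"
    using assms(3,5) by (simp add: ma_def)
  have "cmod (herm h g) ^ 2 * ma ^ 2 \<le> \<eta>"
    using interference_threshold_gram[OF threshold] assms(3,5)
    by (simp add: ma_def mult.commute pos_divide_le_eq)
  then have "cmod (herm h g) * ma \<le> sqrt \<eta>"
    using \<open>ma \<ge> 0\<close> real_sqrt_le_mono by (fastforce simp flip: power_mult_distrib)
  then have "mb \<ge> 0"
    using assms(1) by (simp add: mb_def diff_divide_distrib[symmetric] divide_nonneg_pos)
  moreover have "ma = 0 \<Longrightarrow> mb > 0"
    using assms(1,2) by (simp add: mb_def)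
  ultimately show ?thesis
    using exists_moduli_Arg_diff[OF \<open>ma \<ge> 0\<close>, of mb "Arg (herm h g)"] \<open>ma \<ge> 0\<close>
    unfolding ma_def mb_def by fastforce
qed

lemma optimal_matched_filter:
  assumes "h \<noteq> 0" and "0 \<le> Pt" and "\<eta> \<le> Pt * cmod (herm g h) ^ 2 / norm h ^ 2"
    and "cmod a = sqrt Pt / norm h"
  shows "optimal Pt \<eta> h g (a *s h)"
  unfolding optimal_def feasible_def
proof (intro conjI allI impI)
  show "norm (a *s h) ^ 2 \<le> Pt" and "\<eta> \<le> cmod (herm g (a *s h)) ^ 2"
    using assms by (simp_all add: norm_vector_scalar_mult herm_scale_right norm_mult power_mult_distrib power_divide)
  fix f' assume "norm f' ^ 2 \<le> Pt \<and> \<eta> \<le> cmod (herm g f') ^ 2"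
  then have "cmod (herm h f') ^ 2 \<le> norm h ^ 2 * Pt"
    using cmod_herm_sq_le[of h f'] mult_left_mono[of "norm f' ^ 2" Pt "norm h ^ 2"] by simp
  also have "\<dots> = cmod (herm h (a *s h)) ^ 2"
    using assms by (simp add: herm_scale_right herm_self norm_mult power_mult_distrib power2_eq_square)
  finally show "cmod (herm h f') ^ 2 \<le> cmod (herm h (a *s h)) ^ 2" .
qed

lemma not_feasible_above_power_limit:
  assumes "Pt * norm g ^ 2 < \<eta>"
  shows "\<not> feasible Pt \<eta> g f"
proof
  assume "feasible Pt \<eta> g f"
  then have "\<eta> \<le> norm g ^ 2 * Pt"
    using cmod_herm_sq_le[of g f] mult_left_mono[of "norm f ^ 2" Pt "norm g ^ 2"]
    by (simp add: feasible_def)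
  with assms show False
    by (simp add: mult.commute)
qed

theorem proposition2:
  fixes h g :: "complex ^ 'n" and Pt \<eta> :: real
  assumes "h \<noteq> 0" and "g \<noteq> 0" and "Pt > 0" and "\<eta> > 0"
  shows
    "(\<eta> \<le> Pt * cmod (herm g h) ^ 2 / norm h ^ 2 \<longrightarrow>
       (\<exists>a b::complex. cmod a = sqrt Pt / norm h \<and> b = 0) \<and>
       (\<forall>a b::complex. cmod a = sqrt Pt / norm h \<and> b = 0 \<longrightarrow>
          optimal Pt \<eta> h g (a *s h + b *s g))) \<and>
    (Pt * cmod (herm g h) ^ 2 / norm h ^ 2 \<le> \<eta> \<and> \<eta> \<le> Pt * norm g ^ 2 \<and>
     (\<forall>c d::complex. c *s h + d *s g = 0 \<longrightarrow> c = 0 \<and> d = 0) \<longrightarrow>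
       (\<exists>a b::complex.
          cmod a = sqrt ((Pt * norm g ^ 2 - \<eta>) /
                          (norm h ^ 2 * norm g ^ 2 - cmod (herm h g) ^ 2)) \<and>
          cmod b = sqrt \<eta> / norm g ^ 2 - cmod (herm h g) / norm g ^ 2 * cmod a \<and>
          (\<exists>k::int. Arg a - Arg b = Arg (herm h g) + 2 * pi * of_int k)) \<and>
       (\<forall>a b::complex.
          cmod a = sqrt ((Pt * norm g ^ 2 - \<eta>) /
                          (norm h ^ 2 * norm g ^ 2 - cmod (herm h g) ^ 2)) \<and>
          cmod b = sqrt \<eta> / norm g ^ 2 - cmod (herm h g) / norm g ^ 2 * cmod a \<and>
          (\<exists>k::int. Arg a - Arg b = Arg (herm h g) + 2 * pi * of_int k) \<longrightarrow>
            optimal Pt \<eta> h g (a *s h + b *s g))) \<and>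
    (\<eta> > Pt * norm g ^ 2 \<longrightarrow> \<not> (\<exists>f. feasible Pt \<eta> g f))"
proof -
  have threshold: "Pt * cmod (herm g h) ^ 2 / norm h ^ 2 \<le> \<eta>
                     \<longleftrightarrow> Pt * cmod (herm h g) ^ 2 \<le> \<eta> * norm h ^ 2"
    using assms(1) by (simp add: cmod_herm_commute[of g h] pos_divide_le_eq)
  have "\<exists>a::complex. cmod a = sqrt Pt / norm h"
    using assms(3) by (intro exI[of _ "of_real (sqrt Pt / norm h)"]) (simp add: norm_divide)
  then show ?thesis
    unfolding threshold gram_def[symmetric]
    using optimal_matched_filter[OF assms(1) less_imp_le[OF assms(3)]]
      gram_pos[OF assms(2)] exists_aligned_coefficients[OF assms(2,4)]
      optimal_aligned_combination[OF assms(2) less_imp_le[OF assms(4)]]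
      cnj_mult_mult_eq_of_Arg_diff not_feasible_above_power_limit
    by (intro conjI impI allI) (simp_all, blast+)
qed

end
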